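(* For all integers $k\ge 1$ and $\Delta\ge 3$, there exists a connected graph $G_{k,\Delta}$ with maximum degree $\Delta$ satisfying $\gamma_c(G_{k,\Delta})=k$ and $F_c(G_{k,\Delta})=\gamma_c(G_{k,\Delta})(\Delta-2)+2$.
   Context: Forcing process: given a set of initially colored vertices, at each step a colored vertex with exactly one non-colored neighbor forces (colors) that neighbor. A set $S\subseteq V(G)$ is a forcing set if iterating this process from $S$ eventually colors all vertices; it is a connected forcing set if moreover the induced subgraph $G[S]$ is connected. $F_c(G)$ is the minimum cardinality of a connected forcing set of $G$. A connected dominating set is a set $D\subseteq V(G)$ such that every vertex outside $D$ has a neighbor in $D$ and $G[D]$ is connected; $\gamma_c(G)$ is the minimum cardinality of a connected dominating set. *)

theory Defs
  imports Main
begin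

definition graph :: "'a set \<Rightarrow> ('a \<Rightarrow> 'a \<Rightarrow> bool) \<Rightarrow> bool" where
  "graph V E \<longleftrightarrow> finite V \<and> (\<forall>u v. E u v \<longrightarrow> u \<in> V \<and> v \<in> V)
     \<and> (\<forall>u v. E u v \<longrightarrow> E v u) \<and> (\<forall>v. \<not> E v v)"

definition nbhd :: "'a set \<Rightarrow> ('a \<Rightarrow> 'a \<Rightarrow> bool) \<Rightarrow> 'a \<Rightarrow> 'a set" where
  "nbhd V E v = {u \<in> V. E v u}"

definition degree :: "'a set \<Rightarrow> ('a \<Rightarrow> 'a \<Rightarrow> bool) \<Rightarrow> 'a \<Rightarrow> nat" where
  "degree V E v = card (nbhd V E v)"

definition max_degree_eq :: "'a set \<Rightarrow> ('a \<Rightarrow> 'a \<Rightarrow> bool) \<Rightarrow> nat \<Rightarrow> bool" where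
  "max_degree_eq V E d \<longleftrightarrow> (\<forall>v\<in>V. degree V E v \<le> d) \<and> (\<exists>v\<in>V. degree V E v = d)"

definition connected_on :: "'a set \<Rightarrow> ('a \<Rightarrow> 'a \<Rightarrow> bool) \<Rightarrow> 'a set \<Rightarrow> bool" where
  "connected_on V E S \<longleftrightarrow> S \<noteq> {} \<and> S \<subseteq> V \<and>
     (\<forall>u\<in>S. \<forall>v\<in>S. (\<lambda>x y. x \<in> S \<and> y \<in> S \<and> E x y)\<^sup>*\<^sup>* u v)"

definition connected_graph :: "'a set \<Rightarrow> ('a \<Rightarrow> 'a \<Rightarrow> bool) \<Rightarrow> bool" where
  "connected_graph V E \<longleftrightarrow> graph V E \<and> connected_on V E V"

inductive_set forcing_closure :: "'a set \<Rightarrow> ('a \<Rightarrow> 'a \<Rightarrow> bool) \<Rightarrow> 'a set \<Rightarrow> 'a set"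
  for V E S where
  init: "v \<in> S \<Longrightarrow> v \<in> forcing_closure V E S"
| force: "\<lbrakk> v \<in> forcing_closure V E S; w \<in> nbhd V E v;
            \<forall>u\<in>nbhd V E v. u \<noteq> w \<longrightarrow> u \<in> forcing_closure V E S \<rbrakk>
          \<Longrightarrow> w \<in> forcing_closure V E S"

definition forcing_set :: "'a set \<Rightarrow> ('a \<Rightarrow> 'a \<Rightarrow> bool) \<Rightarrow> 'a set \<Rightarrow> bool" where
  "forcing_set V E S \<longleftrightarrow> S \<subseteq> V \<and> V \<subseteq> forcing_closure V E S"

definition connected_forcing_set :: "'a set \<Rightarrow> ('a \<Rightarrow> 'a \<Rightarrow> bool) \<Rightarrow> 'a set \<Rightarrow> bool" where
  "connected_forcing_set V E S \<longleftrightarrow> forcing_set V E S \<and> connected_on V E S"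

definition connected_forcing_number :: "'a set \<Rightarrow> ('a \<Rightarrow> 'a \<Rightarrow> bool) \<Rightarrow> nat" where
  "connected_forcing_number V E = (LEAST n. \<exists>S. connected_forcing_set V E S \<and> card S = n)"

definition connected_dominating_set :: "'a set \<Rightarrow> ('a \<Rightarrow> 'a \<Rightarrow> bool) \<Rightarrow> 'a set \<Rightarrow> bool" where
  "connected_dominating_set V E D \<longleftrightarrow> D \<subseteq> V \<and> connected_on V E D \<and>
     (\<forall>v\<in>V - D. \<exists>u\<in>D. E v u)"

definition connected_domination_number :: "'a set \<Rightarrow> ('a \<Rightarrow> 'a \<Rightarrow> bool) \<Rightarrow> nat" where
  "connected_domination_number V E = (LEAST n. \<exists>D. connected_dominating_set V E D \<and> card D = n)"

end

theory Submission
  imports Defs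
begin

text \<open>The extremal graph is a caterpillar: a spine 1, \<dots>, k extended to a path by two end
  vertices, with \<Delta> - 2 further pendant vertices at every spine vertex. Since every spine vertex
  supports a pendant, every connected dominating set contains the spine, which is itself one.
  Two uncoloured pendants at a common support vertex can never be forced, so a forcing set misses
  at most one pendant per spine vertex; a connected forcing set therefore contains pendants at
  both ends of the spine, hence by connectivity the whole spine, and so it misses at most k
  vertices. Omitting one pendant per spine vertex attains this bound.\<close>

lemma graph_nbhd_sym: "graph V E \<Longrightarrow> u \<in> nbhd V E w \<longleftrightarrow> w \<in> nbhd V E u"
  unfolding nbhd_def graph_def by auto

lemma connected_onI_root:
  assumes "graph V E" "S \<subseteq> V" "r \<in> S"
    and "\<And>x. x \<in> S \<Longrightarrow> (\<lambda>a b. a \<in> S \<and> b \<in> S \<and> E a b)\<^sup>*\<^sup>* x r"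
  shows "connected_on V E S"
proof -
  let ?R = "\<lambda>a b. a \<in> S \<and> b \<in> S \<and> E a b"
  have "symp ?R" using assms(1) unfolding graph_def by (auto intro: sympI)
  then have "symp ?R\<^sup>*\<^sup>*" by (rule symp_rtranclp)
  then have "?R\<^sup>*\<^sup>* u v" if "u \<in> S" "v \<in> S" for u v
    using assms(4)[OF that(1)] assms(4)[OF that(2)] by (meson sympD rtranclp_trans)
  then show ?thesis using assms(2,3) unfolding connected_on_def by blast
qed

lemma connected_on_has_neighbour:
  assumes "connected_on V E S" "x \<in> S" "y \<in> S" "x \<noteq> y"
  shows "\<exists>z\<in>S. E x z"
proof -
  have "(\<lambda>a b. a \<in> S \<and> b \<in> S \<and> E a b)\<^sup>*\<^sup>* x y"
    using assms(1-3) unfolding connected_on_def by blast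
  then show ?thesis using assms(4) by (cases rule: converse_rtranclpE) auto
qed

lemma connected_on_pendant_neighbour:
  assumes "connected_on V E S" "nbhd V E x = {p}" "x \<in> S" "y \<in> S" "x \<noteq> y"
  shows "p \<in> S"
proof -
  obtain z where z: "z \<in> S" "E x z" using connected_on_has_neighbour[OF assms(1,3-5)] by blast
  moreover have "S \<subseteq> V" using assms(1) unfolding connected_on_def by blast
  ultimately have "z \<in> nbhd V E x" unfolding nbhd_def by blast
  then show ?thesis using assms(2) z(1) by simp
qed

lemma connected_on_separator:
  assumes S: "connected_on V E S" and "a \<in> S" "b \<in> S" "a \<in> A" "b \<notin> A"
    and sep: "\<And>u v. u \<in> A \<Longrightarrow> E u v \<Longrightarrow> v \<in> A \<or> v = c"
  shows "c \<in> S"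
proof (rule ccontr)
  assume "c \<notin> S"
  have "(\<lambda>x y. x \<in> S \<and> y \<in> S \<and> E x y)\<^sup>*\<^sup>* a b"
    using S assms(2,3) unfolding connected_on_def by blast
  then have "b \<in> A"
    by (induction rule: rtranclp_induct) (use \<open>a \<in> A\<close> sep \<open>c \<notin> S\<close> in blast)+
  with \<open>b \<notin> A\<close> show False by contradiction
qed

lemma support_vertex_in_connected_dominating_set:
  assumes g: "graph V E" and D: "connected_dominating_set V E D"
    and x: "nbhd V E x = {p}" "x \<in> V" and y: "y \<in> V" "y \<noteq> x" "y \<noteq> p"
  shows "p \<in> D"
proof (cases "x \<in> D")
  case False
  then obtain u where "u \<in> D" "E x u"
    using D x(2) unfolding connected_dominating_set_def by blast
  then have "u \<in> nbhd V E x" using g unfolding graph_def nbhd_def by blast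
  then show ?thesis using x(1) \<open>u \<in> D\<close> by simp
next
  case True
  obtain u where u: "u \<in> D" "u \<noteq> x"
  proof (cases "y \<in> D")
    case True then show ?thesis using that y(2) by blast
  next
    case False
    then obtain u where "u \<in> D" "E y u"
      using D y(1) unfolding connected_dominating_set_def by blast
    moreover have "u \<noteq> x"
    proof
      assume "u = x"
      then have "y \<in> nbhd V E x" using \<open>E y u\<close> g unfolding graph_def nbhd_def by blast
      with x(1) y(3) show False by simp
    qed
    ultimately show ?thesis using that by blast
  qed
  moreover have "connected_on V E D" using D unfolding connected_dominating_set_def by blast
  ultimately show ?thesis using connected_on_pendant_neighbour[OF _ x(1) True] by blast
qed

lemma forcing_setI_one_step:
  assumes "S \<subseteq> V"
    and "\<And>w. w \<in> V - S \<Longrightarrow> \<exists>v\<in>S. w \<in> nbhd V E v \<and> nbhd V E v - {w} \<subseteq> S"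
  shows "forcing_set V E S"
proof -
  have "w \<in> forcing_closure V E S" if w: "w \<in> V" for w
  proof (cases "w \<in> S")
    case True then show ?thesis by (rule forcing_closure.init)
  next
    case False
    then obtain v where "v \<in> S" "w \<in> nbhd V E v" "nbhd V E v - {w} \<subseteq> S"
      using assms(2) w False by blast
    then show ?thesis by (blast intro: forcing_closure.intros)
  qed
  then show ?thesis using assms(1) unfolding forcing_set_def by blast
qed

text \<open>Whichever of the two is coloured first would have to be forced by p, while the other
  is still uncoloured.\<close>
lemma twin_pendants_not_forced:
  assumes g: "graph V E" and nx: "nbhd V E x = {p}" and ny: "nbhd V E y = {p}"
    and "x \<noteq> y" "x \<notin> S" "y \<notin> S"
  shows "x \<notin> forcing_closure V E S"
proof -
  have twins: "x \<in> nbhd V E p" "y \<in> nbhd V E p"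
    using nx ny graph_nbhd_sym[OF g] by simp_all
  have "z \<noteq> x \<and> z \<noteq> y" if "z \<in> forcing_closure V E S" for z
    using that
  proof (induction rule: forcing_closure.induct)
    case (init v) then show ?case using assms(5,6) by blast
  next
    case (force v w)
    have "v \<in> nbhd V E w" using force.hyps(2) graph_nbhd_sym[OF g] by blast
    then have "w \<in> {x, y} \<Longrightarrow> v = p" using nx ny by auto
    then show ?case using force.IH(2) twins \<open>x \<noteq> y\<close> by (metis insertCI)
  qed
  then show ?thesis by blast
qed

text \<open>Vertices 0 and k + 1 are the end vertices, 1, \<dots>, k the spine, and
  k + 2 + (i - 1) * m + j for j < m the pendants of spine vertex i. The anchor of a vertex outside
  the spine is its unique neighbour; the anchor fixes the spine.\<close>

definition caterpillar_vertices :: "nat \<Rightarrow> nat \<Rightarrow> nat set" where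
  "caterpillar_vertices k m = {..<k + 2 + k * m}"

definition caterpillar_anchor :: "nat \<Rightarrow> nat \<Rightarrow> nat \<Rightarrow> nat" where
  "caterpillar_anchor k m x =
     (if x = 0 then 1 else if x \<le> k then x else if x = k + 1 then k else 1 + (x - (k + 2)) div m)"

definition caterpillar_edge :: "nat \<Rightarrow> nat \<Rightarrow> nat \<Rightarrow> nat \<Rightarrow> bool" where
  "caterpillar_edge k m u v \<longleftrightarrow> u \<in> caterpillar_vertices k m \<and> v \<in> caterpillar_vertices k m \<and>
     (u \<in> {1..k} \<and> v \<in> {1..k} \<and> (v = u + 1 \<or> u = v + 1)
      \<or> u \<notin> {1..k} \<and> v = caterpillar_anchor k m u \<or> v \<notin> {1..k} \<and> u = caterpillar_anchor k m v)"

lemma caterpillar_anchor_pendant: "j < m \<Longrightarrow> caterpillar_anchor k m (k + 2 + i * m + j) = i + 1"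
  unfolding caterpillar_anchor_def by simp

lemma caterpillar_pendant_decomp:
  "k + 2 \<le> x \<Longrightarrow> x = k + 2 + (caterpillar_anchor k m x - 1) * m + (x - (k + 2)) mod m"
  unfolding caterpillar_anchor_def by simp

context
  fixes k m :: nat
  assumes k_pos: "1 \<le> k" and m_pos: "1 \<le> m"
begin

abbreviation "V \<equiv> caterpillar_vertices k m"
abbreviation "E \<equiv> caterpillar_edge k m"
abbreviation "anchor \<equiv> caterpillar_anchor k m"

lemma caterpillar_spine_subset: "{1..k} \<subseteq> V"
  unfolding caterpillar_vertices_def by auto

lemma caterpillar_pendant_in_V:
  assumes "i < k" "j < m"
  shows "k + 2 + i * m + j \<in> V"
proof -
  have "(i + 1) * m \<le> k * m" using assms(1) by (intro mult_le_mono1) simp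
  then show ?thesis using assms(2) unfolding caterpillar_vertices_def by simp
qed

lemma caterpillar_anchor_range:
  assumes "x \<in> V"
  shows "anchor x \<in> {1..k}"
proof (cases "k + 2 \<le> x")
  case True
  then have "x - (k + 2) < k * m" using assms unfolding caterpillar_vertices_def by auto
  then have "(x - (k + 2)) div m < k" by (simp add: less_mult_imp_div_less)
  then show ?thesis using True unfolding caterpillar_anchor_def by auto
qed (use k_pos in \<open>auto simp: caterpillar_anchor_def\<close>)

lemma caterpillar_graph: "graph V E"
proof -
  have "\<not> E v v" for v
    using caterpillar_anchor_range[of v] unfolding caterpillar_edge_def by auto
  then show ?thesis unfolding graph_def caterpillar_edge_def caterpillar_vertices_def by auto
qed

lemma caterpillar_nbhd_leaf:
  assumes "x \<in> V - {1..k}"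
  shows "nbhd V E x = {anchor x}"
  using assms caterpillar_anchor_range caterpillar_spine_subset
  unfolding nbhd_def caterpillar_edge_def by auto

lemma caterpillar_nbhd_spine:
  assumes i: "i \<in> {1..k}"
  shows "nbhd V E i = {i - 1, i + 1} \<union> {k + 2 + (i - 1) * m ..< k + 2 + i * m}"
proof (intro set_eqI iffI)
  have im: "i * m = (i - 1) * m + m" using i by (cases i) auto
  fix y assume "y \<in> nbhd V E i"
  then have "y \<in> {1..k} \<and> (y = i + 1 \<or> i = y + 1) \<or> y \<notin> {1..k} \<and> anchor y = i"
    using i unfolding nbhd_def caterpillar_edge_def by auto
  then consider "y = i + 1" | "i = y + 1" | "y = 0" "anchor y = i" | "y = k + 1" "anchor y = i"
    | "k + 2 \<le> y" "anchor y = i"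
    by (cases "k + 2 \<le> y") auto
  then show "y \<in> {i - 1, i + 1} \<union> {k + 2 + (i - 1) * m ..< k + 2 + i * m}"
  proof cases
    case 5
    have "(y - (k + 2)) mod m < m" using m_pos by simp
    moreover have "y = k + 2 + (i - 1) * m + (y - (k + 2)) mod m"
      using caterpillar_pendant_decomp[where m = m, OF 5(1)] 5(2) by simp
    ultimately show ?thesis using im by auto
  qed (use i in \<open>auto simp: caterpillar_anchor_def\<close>)
next
  fix y assume y: "y \<in> {i - 1, i + 1} \<union> {k + 2 + (i - 1) * m ..< k + 2 + i * m}"
  show "y \<in> nbhd V E i"
  proof (cases "y \<in> {i - 1, i + 1}")
    case True
    then show ?thesis using i caterpillar_spine_subset
      by (auto simp: nbhd_def caterpillar_edge_def caterpillar_anchor_def caterpillar_vertices_def)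
  next
    case False
    define j where "j = y - (k + 2 + (i - 1) * m)"
    have im: "i * m = (i - 1) * m + m" using i by (cases i) auto
    then have j: "j < m" "y = k + 2 + (i - 1) * m + j"
      using y False unfolding j_def by auto
    have "y \<in> V" using caterpillar_pendant_in_V[of "i - 1" j] j i by auto
    moreover have "anchor y = i" using caterpillar_anchor_pendant[OF j(1)] j(2) i by simp
    moreover have "y \<notin> {1..k}" using j(2) by simp
    ultimately show ?thesis using i caterpillar_spine_subset
      unfolding nbhd_def caterpillar_edge_def by auto
  qed
qed

lemma caterpillar_degree_spine:
  assumes i: "i \<in> {1..k}"
  shows "degree V E i = m + 2"
proof -
  have "card ({i - 1, i + 1} \<union> {k + 2 + (i - 1) * m ..< k + 2 + i * m})
      = card {i - 1, i + 1} + card {k + 2 + (i - 1) * m ..< k + 2 + i * m}"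
    by (rule card_Un_disjoint) (use i in auto)
  moreover have "card {i - 1, i + 1} = 2" using i by auto
  moreover have "i * m = (i - 1) * m + m" using i by (cases i) auto
  ultimately show ?thesis unfolding degree_def caterpillar_nbhd_spine[OF i] by simp
qed

lemma caterpillar_max_degree: "max_degree_eq V E (m + 2)"
proof -
  have "degree V E v \<le> m + 2" if "v \<in> V" for v
    using that caterpillar_degree_spine[of v] caterpillar_nbhd_leaf[of v]
    unfolding degree_def by fastforce
  moreover have "degree V E 1 = m + 2" using caterpillar_degree_spine k_pos by simp
  ultimately show ?thesis unfolding max_degree_eq_def using caterpillar_spine_subset k_pos by auto
qed

lemma caterpillar_connected_on_spine_superset:
  assumes "T \<subseteq> V" "{1..k} \<subseteq> T"
  shows "connected_on V E T"
proof (rule connected_onI_root[OF caterpillar_graph assms(1)])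
  let ?R = "\<lambda>a b. a \<in> T \<and> b \<in> T \<and> E a b"
  have spine: "?R\<^sup>*\<^sup>* i 1" if "i \<in> {1..k}" for i
    using that
  proof (induction i)
    case (Suc j)
    show ?case
    proof (cases "j = 0")
      case False
      then have "?R (Suc j) j" using Suc.prems assms caterpillar_spine_subset
        unfolding caterpillar_edge_def by auto
      moreover have "?R\<^sup>*\<^sup>* j 1" using Suc False by auto
      ultimately show ?thesis by (rule converse_rtranclp_into_rtranclp)
    qed simp
  qed simp
  show "1 \<in> T" using assms(2) k_pos by auto
  fix x assume x: "x \<in> T"
  show "?R\<^sup>*\<^sup>* x 1"
  proof (cases "x \<in> {1..k}")
    case False
    have "x \<in> V" using x assms(1) by blast
    then have "?R x (anchor x)"
      using x False assms caterpillar_anchor_range caterpillar_spine_subset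
      unfolding caterpillar_edge_def by blast
    moreover have "?R\<^sup>*\<^sup>* (anchor x) 1" using spine caterpillar_anchor_range \<open>x \<in> V\<close> by blast
    ultimately show ?thesis by (rule converse_rtranclp_into_rtranclp)
  qed (use spine in blast)
qed

lemma caterpillar_connected_graph: "connected_graph V E"
  unfolding connected_graph_def
  using caterpillar_graph caterpillar_connected_on_spine_superset[OF order_refl caterpillar_spine_subset]
  by blast

text \<open>This makes the spine vertex i the only exit from \<open>{x. anchor x < i}\<close>.\<close>
lemma caterpillar_edge_anchor_step:
  assumes "E u v"
  shows "anchor v \<le> anchor u + 1 \<and> (anchor v = anchor u + 1 \<longrightarrow> v = anchor v)"
proof -
  have spine: "x \<in> {1..k} \<Longrightarrow> anchor x = x" for x by (simp add: caterpillar_anchor_def)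
  have "u \<in> V" "v \<in> V" using assms unfolding caterpillar_edge_def by auto
  then have "anchor (anchor u) = anchor u" "anchor (anchor v) = anchor v"
    using spine caterpillar_anchor_range by simp_all
  then show ?thesis using assms spine unfolding caterpillar_edge_def by auto
qed

lemma caterpillar_spine_connected_dominating: "connected_dominating_set V E {1..k}"
  unfolding connected_dominating_set_def
  using caterpillar_spine_subset
    caterpillar_connected_on_spine_superset[OF caterpillar_spine_subset order_refl]
    caterpillar_anchor_range caterpillar_spine_subset by (fastforce simp: caterpillar_edge_def)

lemma caterpillar_connected_dominating_contains_spine:
  assumes D: "connected_dominating_set V E D"
  shows "{1..k} \<subseteq> D"
proof
  fix i assume i: "i \<in> {1..k}"
  let ?x = "k + 2 + (i - 1) * m + 0"
  have x: "?x \<in> V - {1..k}" using caterpillar_pendant_in_V[of "i - 1" 0] i m_pos by auto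
  have "anchor ?x = i" using caterpillar_anchor_pendant[of 0 m] i m_pos by simp
  then have "nbhd V E ?x = {i}" using caterpillar_nbhd_leaf[OF x] by simp
  moreover have "k + 1 \<in> V" "k + 1 \<noteq> ?x" "k + 1 \<noteq> i" using i
    unfolding caterpillar_vertices_def by auto
  ultimately show "i \<in> D"
    using support_vertex_in_connected_dominating_set[OF caterpillar_graph D] x by blast
qed

lemma caterpillar_connected_domination_number: "connected_domination_number V E = k"
  unfolding connected_domination_number_def
proof (rule Least_equality)
  show "\<exists>D. connected_dominating_set V E D \<and> card D = k"
    using caterpillar_spine_connected_dominating by force
next
  fix n assume "\<exists>D. connected_dominating_set V E D \<and> card D = n"
  then obtain D where D: "connected_dominating_set V E D" "card D = n" by blast
  have "finite D" using D(1) finite_subset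
    unfolding connected_dominating_set_def caterpillar_vertices_def by blast
  then show "k \<le> n"
    using card_mono[OF _ caterpillar_connected_dominating_contains_spine[OF D(1)]] D(2) by simp
qed

lemma caterpillar_connected_forcing_set_exists:
  "\<exists>S. connected_forcing_set V E S \<and> card S = k * m + 2"
proof -
  define P where "P = (\<lambda>i. k + 2 + i * m) ` {..<k}"
  have P_leaf: "k + 2 + i * m \<in> V - {1..k}" "anchor (k + 2 + i * m) = i + 1" if "i < k" for i
    using caterpillar_pendant_in_V[OF that, of 0] caterpillar_anchor_pendant[of 0 m k i] m_pos
    by auto
  have "inj_on (\<lambda>i. k + 2 + i * m) {..<k}" using m_pos unfolding inj_on_def by auto
  then have "card P = k" unfolding P_def by (simp add: card_image)
  moreover have "P \<subseteq> V" using P_leaf unfolding P_def by auto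
  ultimately have card: "card (V - P) = k * m + 2"
    by (simp add: card_Diff_subset finite_subset caterpillar_vertices_def)
  have "forcing_set V E (V - P)"
  proof (rule forcing_setI_one_step)
    fix w assume "w \<in> V - (V - P)"
    then obtain i where i: "i < k" "w = k + 2 + i * m" unfolding P_def by auto
    have w_nbhd: "nbhd V E w = {i + 1}" using caterpillar_nbhd_leaf P_leaf[OF i(1)] i(2) by simp
    have "nbhd V E (i + 1) - {w} \<subseteq> V - P"
    proof
      fix u assume u: "u \<in> nbhd V E (i + 1) - {w}"
      have "u \<notin> P"
      proof
        assume "u \<in> P"
        then obtain i' where i': "i' < k" "u = k + 2 + i' * m" unfolding P_def by auto
        have "i + 1 \<in> nbhd V E u" using u graph_nbhd_sym[OF caterpillar_graph] by blast
        then have "i' = i" using caterpillar_nbhd_leaf P_leaf[OF i'(1)] i'(2) by simp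
        then show False using u i(2) i'(2) by simp
      qed
      then show "u \<in> V - P" using u unfolding nbhd_def by blast
    qed
    moreover have "i + 1 \<in> V - P" "w \<in> nbhd V E (i + 1)"
      using i(1) caterpillar_spine_subset P_leaf graph_nbhd_sym[OF caterpillar_graph] w_nbhd
      unfolding P_def
      by auto
    ultimately show "\<exists>v\<in>V - P. w \<in> nbhd V E v \<and> nbhd V E v - {w} \<subseteq> V - P" by blast
  qed auto
  moreover have "{1..k} \<subseteq> V - P" using P_leaf caterpillar_spine_subset unfolding P_def by auto
  ultimately show ?thesis
    unfolding connected_forcing_set_def
    using caterpillar_connected_on_spine_superset[of "V - P"] card by blast
qed

lemma caterpillar_forcing_set_twin_leaf:
  assumes S: "forcing_set V E S" and "x \<in> V - {1..k}" "y \<in> V - {1..k}"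
    and "anchor x = anchor y" "x \<noteq> y" "x \<notin> S"
  shows "y \<in> S"
proof (rule ccontr)
  assume "y \<notin> S"
  then have "x \<notin> forcing_closure V E S"
    using twin_pendants_not_forced[OF caterpillar_graph] caterpillar_nbhd_leaf assms(2-6) by metis
  then show False using S assms(2) unfolding forcing_set_def by blast
qed

text \<open>Each end of the spine carries two leaves, one of which must lie in a forcing set; for
  k = 1 all of them hang at the same vertex, which is why the choice of b has to avoid a.\<close>
lemma caterpillar_forcing_set_end_leaves:
  assumes F: "forcing_set V E S"
  obtains a b where "a \<in> S" "b \<in> S" "a \<noteq> b" "a \<in> V - {1..k}" "b \<in> V - {1..k}"
    "anchor a = 1" "anchor b = k"
proof -
  let ?p = "k + 2" and ?q = "k + 2 + (k - 1) * m"
  have leaves: "0 \<in> V - {1..k}" "k + 1 \<in> V - {1..k}" "?p \<in> V - {1..k}" "?q \<in> V - {1..k}"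
    using caterpillar_pendant_in_V[of 0 0] caterpillar_pendant_in_V[of "k - 1" 0] k_pos m_pos
    unfolding caterpillar_vertices_def by auto
  have anchors: "anchor 0 = 1" "anchor (k + 1) = k" "anchor ?p = 1" "anchor ?q = k"
    using caterpillar_anchor_pendant[of 0 m k] k_pos m_pos by (auto simp: caterpillar_anchor_def)
  have twin: "x \<in> S \<or> y \<in> S"
    if "x \<in> V - {1..k}" "y \<in> V - {1..k}" "anchor x = anchor y" "x \<noteq> y" for x y
    using caterpillar_forcing_set_twin_leaf[OF F that] by blast
  obtain a where a: "a \<in> S" "a \<in> V - {1..k}" "anchor a = 1" "a = 0 \<or> a = ?p \<and> 0 \<notin> S"
    using twin[OF leaves(1,3)] leaves anchors by (cases "0 \<in> S") auto
  obtain b where "b \<in> S" "b \<in> V - {1..k}" "anchor b = k" "b \<noteq> a"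
  proof (cases "k + 1 \<in> S")
    case True
    then show ?thesis using that leaves(2) anchors(2) a(4) by auto
  next
    case False
    have "?q \<in> S" using twin[OF leaves(2,4)] anchors False by simp
    moreover have "?q \<noteq> a"
    proof
      assume "?q = a"
      then have "k = 1" "0 \<notin> S" using a(4) k_pos m_pos by auto
      then show False using twin[OF leaves(1,2)] anchors False by simp
    qed
    ultimately show ?thesis using that leaves(4) anchors(4) by blast
  qed
  then show ?thesis using that a(1-3) by blast
qed

lemma caterpillar_connected_forcing_contains_spine:
  assumes S: "connected_forcing_set V E S"
  shows "{1..k} \<subseteq> S"
proof
  have C: "connected_on V E S" using S unfolding connected_forcing_set_def by blast
  obtain a b where ab: "a \<in> S" "b \<in> S" "a \<noteq> b" "a \<in> V - {1..k}" "b \<in> V - {1..k}"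
    "anchor a = 1" "anchor b = k"
    using caterpillar_forcing_set_end_leaves S unfolding connected_forcing_set_def by blast
  fix i assume i: "i \<in> {1..k}"
  consider "i = 1" | "i = k" | "1 < i" "i < k" using i by fastforce
  then show "i \<in> S"
  proof cases
    case 1
    then show ?thesis
      using connected_on_pendant_neighbour[OF C _ ab(1,2,3)] caterpillar_nbhd_leaf ab by simp
  next
    case 2
    then show ?thesis
      using connected_on_pendant_neighbour[OF C _ ab(2,1) ab(3)[symmetric]] caterpillar_nbhd_leaf ab
      by simp
  next
    case 3
    show ?thesis
    proof (rule connected_on_separator[OF C ab(1,2)])
      show "a \<in> {x \<in> V. anchor x < i}" "b \<notin> {x \<in> V. anchor x < i}" using ab 3 by auto
      fix u v assume "u \<in> {x \<in> V. anchor x < i}" "E u v"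
      then show "v \<in> {x \<in> V. anchor x < i} \<or> v = i"
        using caterpillar_edge_anchor_step[of u v] unfolding caterpillar_edge_def by force
    qed
  qed
qed

lemma caterpillar_connected_forcing_card_ge:
  assumes S: "connected_forcing_set V E S"
  shows "k * m + 2 \<le> card S"
proof -
  have F: "forcing_set V E S" and SV: "S \<subseteq> V"
    using S unfolding connected_forcing_set_def forcing_set_def by auto
  have leaves: "V - S \<subseteq> V - {1..k}"
    using caterpillar_connected_forcing_contains_spine[OF S] by blast
  have "inj_on anchor (V - S)"
  proof (rule inj_onI)
    fix x y assume "x \<in> V - S" "y \<in> V - S" "anchor x = anchor y"
    then show "x = y" using caterpillar_forcing_set_twin_leaf[OF F, of x y] leaves by blast
  qed
  moreover have "anchor ` (V - S) \<subseteq> {1..k}" using caterpillar_anchor_range by blast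
  ultimately have "card (V - S) \<le> card {1..k}" by (rule card_inj_on_le) simp
  moreover have "finite V" by (simp add: caterpillar_vertices_def)
  then have "card (V - S) = card V - card S" "card S \<le> card V"
    using SV by (simp_all add: card_Diff_subset card_mono finite_subset)
  moreover have "card V = k + 2 + k * m" "card {1..k} = k"
    unfolding caterpillar_vertices_def by simp_all
  ultimately show ?thesis by linarith
qed

lemma caterpillar_connected_forcing_number: "connected_forcing_number V E = k * m + 2"
  unfolding connected_forcing_number_def
  using caterpillar_connected_forcing_set_exists caterpillar_connected_forcing_card_ge
  by (intro Least_equality) blast+

end

theorem proposition4:
  fixes k \<Delta> :: nat
  assumes "k \<ge> 1" and "\<Delta> \<ge> 3"
  shows "\<exists>(V :: nat set) E. connected_graph V E \<and> max_degree_eq V E \<Delta> \<and>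
           connected_domination_number V E = k \<and>
           connected_forcing_number V E = connected_domination_number V E * (\<Delta> - 2) + 2"
proof -
  define m where "m = \<Delta> - 2"
  have m: "1 \<le> m" and \<Delta>: "\<Delta> = m + 2" using assms(2) unfolding m_def by auto
  show ?thesis
  proof (intro exI conjI)
    show "connected_graph (caterpillar_vertices k m) (caterpillar_edge k m)"
      by (rule caterpillar_connected_graph[OF assms(1) m])
    show "max_degree_eq (caterpillar_vertices k m) (caterpillar_edge k m) \<Delta>"
      using caterpillar_max_degree[OF assms(1) m] \<Delta> by simp
    show "connected_domination_number (caterpillar_vertices k m) (caterpillar_edge k m) = k"
      by (rule caterpillar_connected_domination_number[OF assms(1) m])
    then show "connected_forcing_number (caterpillar_vertices k m) (caterpillar_edge k m) =
        connected_domination_number (caterpillar_vertices k m) (caterpillar_edge k m) * (\<Delta> - 2) + 2"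
      using caterpillar_connected_forcing_number[OF assms(1) m] m_def by simp
  qed
qed

end
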